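(* Let $F$ be a field and let $f=\sum_{\sigma\in S_d}\lambda_\sigma x_{\sigma(1)}\cdots x_{\sigma(d)}\in F\langle X\rangle$ be a multilinear polynomial of degree $d\ge 2$ such that $\sum_{\sigma\in S_d}\lambda_\sigma=0$ and $\sum_{\sigma\in S_d,\ \sigma^{-1}(1)<\sigma^{-1}(2)}\lambda_\sigma\neq 0$. Let $\mathcal A$ be a unital $F$-algebra and let $\phi:\mathcal A\to\mathcal A$ be a linear map that preserves zeros of $f$ and satisfies $\phi(1)\in F^*\cdot 1$. If $a,b\in\mathcal A$ satisfy $ab=ba=0$, then $\phi(a)\phi(b)=\phi(b)\phi(a)$.
   Context: $F\langle X\rangle$ is the free algebra over $F$ in noncommuting indeterminates $x_1,x_2,\ldots$. A map $\phi$ on an $F$-algebra $\mathcal A$ preserves zeros of $f$ if for all $a_1,\ldots,a_d\in\mathcal A$, $f(a_1,\ldots,a_d)=0$ implies $f(\phi(a_1),\ldots,\phi(a_d))=0$. *)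

theory Defs
  imports "HOL-Combinatorics.Permutations"
begin

definition unital_algebra :: "('k::field \<Rightarrow> 'a::ring_1 \<Rightarrow> 'a) \<Rightarrow> bool" where
  "unital_algebra sm \<longleftrightarrow>
     (\<forall>c x y. sm c (x + y) = sm c x + sm c y) \<and>
     (\<forall>c d x. sm (c + d) x = sm c x + sm d x) \<and>
     (\<forall>c d x. sm (c * d) x = sm c (sm d x)) \<and>
     (\<forall>x. sm 1 x = x) \<and>
     (\<forall>c x y. sm c (x * y) = sm c x * y) \<and>
     (\<forall>c x y. sm c (x * y) = x * sm c y)"

definition linear_map :: "('k::field \<Rightarrow> 'a::ring_1 \<Rightarrow> 'a) \<Rightarrow> ('a \<Rightarrow> 'a) \<Rightarrow> bool" where
  "linear_map sm \<phi> \<longleftrightarrow> (\<forall>x y. \<phi> (x + y) = \<phi> x + \<phi> y) \<and> (\<forall>c x. \<phi> (sm c x) = sm c (\<phi> x))"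

definition eval_multilinear ::
  "('k::field \<Rightarrow> 'a::ring_1 \<Rightarrow> 'a) \<Rightarrow> nat \<Rightarrow> ((nat \<Rightarrow> nat) \<Rightarrow> 'k) \<Rightarrow> (nat \<Rightarrow> 'a) \<Rightarrow> 'a" where
  "eval_multilinear sm d lam a =
     (\<Sum>\<sigma>\<in>{\<sigma>. \<sigma> permutes {1..d}}. sm (lam \<sigma>) (prod_list (map (\<lambda>i. a (\<sigma> i)) [1..<d+1])))"

definition preserves_zeros ::
  "('k::field \<Rightarrow> 'a::ring_1 \<Rightarrow> 'a) \<Rightarrow> nat \<Rightarrow> ((nat \<Rightarrow> nat) \<Rightarrow> 'k) \<Rightarrow> ('a \<Rightarrow> 'a) \<Rightarrow> bool" where
  "preserves_zeros sm d lam \<phi> \<longleftrightarrow>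
     (\<forall>a. eval_multilinear sm d lam a = 0 \<longrightarrow> eval_multilinear sm d lam (\<phi> \<circ> a) = 0)"

end

theory Submission
  imports Defs
begin

(* Put x_1 = x, x_2 = y and x_i = c*1 for i > 2 in the
   multilinear polynomial f.  Every monomial x_{s 1} ... x_{s d} then collapses to
   c^(d-2) x y or c^(d-2) y x, according as 1 precedes 2 in the word s 1 ... s d,
   i.e. as inv s 1 < inv s 2.  Writing mu for the sum of the coefficients with
   inv s 1 < inv s 2 and nu for the remaining ones, f evaluates to
   c^(d-2) (mu x y + nu y x)   (lemma eval_at_two_var_point).
   At (a, b, 1, ..., 1) this vanishes because ab = ba = 0; since phi preserves zeros
   of f and phi 1 = c 1, it also vanishes at (phi a, phi b, c, ..., c).  The
   hypothesis mu + nu = 0 turns this into c^(d-2) mu (phi a phi b - phi b phi a) = 0,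
   and c^(d-2) mu is a nonzero scalar, so it can be cancelled. *)

lemma unital_algebra_laws:
  assumes "unital_algebra sm"
  shows "sm c (x + y) = sm c x + sm c y" "sm (c + d) x = sm c x + sm d x"
    "sm (c * d) x = sm c (sm d x)" "sm 1 x = x" "sm c (x * y) = sm c x * y"
    "sm c (x * y) = x * sm c y"
  using assms unfolding unital_algebra_def by blast+

lemma smult_zero:
  assumes "unital_algebra sm"
  shows "sm c 0 = 0" "sm 0 x = 0"
proof -
  have "sm c (0 + 0) = sm c 0 + sm c 0" using unital_algebra_laws(1)[OF assms] .
  then show "sm c 0 = 0" by simp
  have "sm (0 + 0) x = sm 0 x + sm 0 x" using unital_algebra_laws(2)[OF assms] .
  then show "sm 0 x = 0" by simp
qed

lemma smult_minus:
  assumes "unital_algebra sm"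
  shows "sm (- c) x = - sm c x" "sm c (x - y) = sm c x - sm c y"
proof -
  have "sm (- c + c) x = sm (- c) x + sm c x" using unital_algebra_laws(2)[OF assms] .
  then show "sm (- c) x = - sm c x"
    using smult_zero[OF assms] by (simp add: eq_neg_iff_add_eq_0)
  have "sm c (x - y + y) = sm c (x - y) + sm c y" using unital_algebra_laws(1)[OF assms] .
  then show "sm c (x - y) = sm c x - sm c y" by (simp add: algebra_simps)
qed

lemma smult_sum_left:
  assumes "unital_algebra sm"
  shows "(\<Sum>s\<in>S. sm (g s) z) = sm (\<Sum>s\<in>S. g s) z"
  by (induction S rule: infinite_finite_induct)
     (simp_all add: smult_zero[OF assms] unital_algebra_laws(2)[OF assms])

lemma smult_sum_right:
  assumes "unital_algebra sm"
  shows "(\<Sum>s\<in>S. sm k (g s)) = sm k (\<Sum>s\<in>S. g s)"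
  by (induction S rule: infinite_finite_induct)
     (simp_all add: smult_zero[OF assms] unital_algebra_laws(1)[OF assms])

lemma smult_commute:
  assumes "unital_algebra sm"
  shows "sm c (sm k x) = sm k (sm c x)"
  by (metis mult.commute unital_algebra_laws(3)[OF assms])

lemma smult_eq_0_cancel:
  assumes "unital_algebra sm" "k \<noteq> 0" "sm k x = 0"
  shows "x = 0"
proof -
  have "x = sm (inverse k * k) x"
    using assms(2) by (simp add: unital_algebra_laws(4)[OF assms(1)])
  also have "\<dots> = sm (inverse k) (sm k x)" by (rule unital_algebra_laws(3)[OF assms(1)])
  finally show ?thesis using assms(3) smult_zero[OF assms(1)] by simp
qed

lemma prod_list_scalar_factors:
  assumes "unital_algebra sm" "\<And>i. \<not> Q i \<Longrightarrow> B i = sm c 1"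
  shows "prod_list (map B L) =
    sm (c ^ length (filter (\<lambda>i. \<not> Q i) L)) (prod_list (map B (filter Q L)))"
proof (induction L)
  case Nil
  then show ?case using unital_algebra_laws(4)[OF assms(1)] by simp
next
  case (Cons i L)
  show ?case
  proof (cases "Q i")
    case True
    then show ?thesis using Cons unital_algebra_laws(6)[OF assms(1)] by simp
  next
    case False
    then show ?thesis
      using Cons assms(2) unital_algebra_laws(3,4)[OF assms(1)]
      by (simp add: unital_algebra_laws(5)[OF assms(1), symmetric])
  qed
qed

lemma permutation_word_restrict_1_2:
  assumes "s permutes {1..d}" "d \<ge> 2"
  shows "filter (\<lambda>i. i = 1 \<or> i = (2::nat)) (map s [1..<d+1]) =
    (if inv s 1 < inv s 2 then [1,2] else [2,1])"
proof -
  define p where "p = inv s 1"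
  define q where "q = inv s 2"
  have inv_perm: "inv s permutes {1..d}" using assms(1) by (rule permutes_inv)
  have p: "p \<in> {1..d}" and q: "q \<in> {1..d}"
    unfolding p_def q_def using permutes_in_image[OF inv_perm] assms(2) by auto
  have "p \<noteq> q"
    unfolding p_def q_def using permutes_inj[OF inv_perm] by (metis inj_eq numeral_One numeral_eq_iff semiring_norm(85))
  have s_pq: "s p = 1" "s q = 2"
    unfolding p_def q_def using assms(1) by (simp_all add: permutes_inverses(1))
  have hits: "(s j = 1 \<or> s j = 2) \<longleftrightarrow> (j = p \<or> j = q)" for j
    unfolding p_def q_def using assms(1) by (metis permutes_inverses(1,2))
  have "filter (\<lambda>i. i = 1 \<or> i = 2) (map s [1..<d+1]) = map s (filter (\<lambda>j. j = p \<or> j = q) [1..<d+1])"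
    unfolding filter_map comp_def hits ..
  moreover have "filter (\<lambda>j. j = p \<or> j = q) [1..<d+1] = (if p < q then [p,q] else [q,p])"
  proof (rule sorted_distinct_set_unique)
    show "sorted (filter (\<lambda>j. j = p \<or> j = q) [1..<d+1])"
      by (rule sorted_wrt_filter) (simp del: upt_Suc)
  qed (use p q \<open>p \<noteq> q\<close> in \<open>auto simp del: upt_Suc\<close>)
  ultimately show ?thesis using s_pq unfolding p_def[symmetric] q_def[symmetric] by auto
qed

definition two_var_point :: "('k::field \<Rightarrow> 'a::ring_1 \<Rightarrow> 'a) \<Rightarrow> 'a \<Rightarrow> 'a \<Rightarrow> 'k \<Rightarrow> nat \<Rightarrow> 'a" where
  "two_var_point sm x y c = (\<lambda>i. if i = 1 then x else if i = 2 then y else sm c 1)"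

lemma monomial_at_two_var_point:
  assumes "unital_algebra sm" "s permutes {1..d}" "d \<ge> 2"
  shows "prod_list (map (\<lambda>i. two_var_point sm x y c (s i)) [1..<d+1]) =
    sm (c ^ (d - 2)) (if inv s 1 < inv s 2 then x * y else y * x)"
proof -
  let ?B = "two_var_point sm x y c"
  let ?Q = "\<lambda>i. i = 1 \<or> i = (2::nat)"
  let ?L = "map s [1..<d+1]"
  have word: "filter ?Q ?L = (if inv s 1 < inv s 2 then [1,2] else [2,1])"
    by (rule permutation_word_restrict_1_2[OF assms(2,3)])
  have "length (filter ?Q ?L) + length (filter (\<lambda>i. \<not> ?Q i) ?L) = d"
    using sum_length_filter_compl[of ?Q ?L] by (simp only: length_map length_upt)
  moreover have "length (filter ?Q ?L) = 2" unfolding word by simp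
  ultimately have scalars: "length (filter (\<lambda>i. \<not> ?Q i) ?L) = d - 2" by linarith
  have "prod_list (map (\<lambda>i. ?B (s i)) [1..<d+1]) = prod_list (map ?B ?L)"
    by (simp add: comp_def)
  also have "\<dots> = sm (c ^ (d - 2)) (prod_list (map ?B (filter ?Q ?L)))"
    using prod_list_scalar_factors[OF assms(1), of ?Q ?B c ?L] scalars
    by (simp add: two_var_point_def)
  also have "\<dots> = sm (c ^ (d - 2)) (if inv s 1 < inv s 2 then x * y else y * x)"
    using word by (simp add: two_var_point_def)
  finally show ?thesis .
qed

lemma eval_at_two_var_point:
  assumes "unital_algebra sm" "d \<ge> 2"
  defines "S \<equiv> {s. s permutes {1..d}}"
    and "P \<equiv> \<lambda>s::nat \<Rightarrow> nat. inv s 1 < inv s 2"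
  shows "eval_multilinear sm d lam (two_var_point sm x y c) =
    sm (c ^ (d - 2)) (sm (\<Sum>s\<in>S \<inter> {s. P s}. lam s) (x * y) + sm (\<Sum>s\<in>S \<inter> - {s. P s}. lam s) (y * x))"
proof -
  let ?k = "c ^ (d - 2)"
  have finite_S: "finite S" unfolding S_def by (rule finite_permutations) simp
  have "eval_multilinear sm d lam (two_var_point sm x y c) =
      (\<Sum>s\<in>S. sm (lam s) (sm ?k (if P s then x * y else y * x)))"
    unfolding eval_multilinear_def S_def P_def
  proof (rule sum.cong)
    fix s assume "s \<in> {s. s permutes {1..d}}"
    then show "sm (lam s) (prod_list (map (\<lambda>i. two_var_point sm x y c (s i)) [1..<d+1])) =
        sm (lam s) (sm ?k (if inv s 1 < inv s 2 then x * y else y * x))"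
      by (subst monomial_at_two_var_point[OF assms(1) _ assms(2)]) simp_all
  qed simp
  also have "\<dots> = (\<Sum>s\<in>S. sm ?k (if P s then sm (lam s) (x * y) else sm (lam s) (y * x)))"
    by (intro sum.cong refl) (simp add: smult_commute[OF assms(1), of "lam _" ?k])
  also have "\<dots> = sm ?k (\<Sum>s\<in>S. if P s then sm (lam s) (x * y) else sm (lam s) (y * x))"
    by (rule smult_sum_right[OF assms(1)])
  also have "\<dots> = sm ?k (sm (\<Sum>s\<in>S \<inter> {s. P s}. lam s) (x * y) + sm (\<Sum>s\<in>S \<inter> - {s. P s}. lam s) (y * x))"
    unfolding sum.If_cases[OF finite_S] smult_sum_left[OF assms(1)] ..
  finally show ?thesis .
qed

theorem lemma3p4:
  fixes sm :: "'k::field \<Rightarrow> 'a::ring_1 \<Rightarrow> 'a"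
    and lam :: "(nat \<Rightarrow> nat) \<Rightarrow> 'k"
    and \<phi> :: "'a \<Rightarrow> 'a"
    and d :: nat and a b :: 'a
  assumes "unital_algebra sm"
    and "d \<ge> 2"
    and "(\<Sum>\<sigma>\<in>{\<sigma>. \<sigma> permutes {1..d}}. lam \<sigma>) = 0"
    and "(\<Sum>\<sigma>\<in>{\<sigma>. \<sigma> permutes {1..d} \<and> inv \<sigma> 1 < inv \<sigma> 2}. lam \<sigma>) \<noteq> 0"
    and "linear_map sm \<phi>"
    and "preserves_zeros sm d lam \<phi>"
    and "\<exists>c. c \<noteq> 0 \<and> \<phi> 1 = sm c 1"
    and "a * b = 0" and "b * a = 0"
  shows "\<phi> a * \<phi> b = \<phi> b * \<phi> a"
proof -
  note alg = assms(1)
  obtain c where c: "c \<noteq> 0" "\<phi> 1 = sm c 1" using assms(7) by blast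
  define S where "S = {s. s permutes {1..d}}"
  define P where "P = (\<lambda>s::nat \<Rightarrow> nat. inv s 1 < inv s 2)"
  define \<mu> where "\<mu> = (\<Sum>s\<in>S \<inter> {s. P s}. lam s)"
  define \<nu> where "\<nu> = (\<Sum>s\<in>S \<inter> - {s. P s}. lam s)"
  have "\<mu> \<noteq> 0" using assms(4) unfolding \<mu>_def S_def P_def by (simp add: Collect_conj_eq)
  have "\<nu> = - \<mu>"
    using assms(3) sum.Int_Diff[of S lam "{s. P s}"] finite_permutations[of "{1..d}"]
    unfolding \<mu>_def \<nu>_def S_def by (simp add: Diff_eq eq_neg_iff_add_eq_0 add.commute)
  have eval: "eval_multilinear sm d lam (two_var_point sm x y k) =
      sm (k ^ (d - 2)) (sm \<mu> (x * y) + sm \<nu> (y * x))" for x y k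
    unfolding \<mu>_def \<nu>_def S_def P_def by (rule eval_at_two_var_point[OF alg assms(2)])
  have "eval_multilinear sm d lam (two_var_point sm a b 1) = 0"
    using assms(8,9) by (simp add: eval smult_zero[OF alg])
  moreover have "\<phi> \<circ> two_var_point sm a b 1 = two_var_point sm (\<phi> a) (\<phi> b) c"
    using c(2) by (auto simp: two_var_point_def unital_algebra_laws(4)[OF alg])
  ultimately have "eval_multilinear sm d lam (two_var_point sm (\<phi> a) (\<phi> b) c) = 0"
    using assms(6) unfolding preserves_zeros_def by metis
  then have "sm (c ^ (d - 2) * \<mu>) (\<phi> a * \<phi> b - \<phi> b * \<phi> a) = 0"
    using \<open>\<nu> = - \<mu>\<close>
    by (simp add: eval smult_minus[OF alg] unital_algebra_laws(3)[OF alg])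
  then have "\<phi> a * \<phi> b - \<phi> b * \<phi> a = 0"
    by (rule smult_eq_0_cancel[OF alg, rotated]) (simp add: c(1) \<open>\<mu> \<noteq> 0\<close>)
  then show ?thesis by simp
qed

end
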